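(* Let $\boldsymbol{x}\sim p(\boldsymbol{x})$ on $\mathbb{R}^d$ and $y\in\{0,1\}$ with $\mathbb{P}(y=1\mid\boldsymbol{x})=\sigma(\boldsymbol{x}^\top\boldsymbol{\theta}_{\mathrm{true}})$, where $\sigma(t)=1/(1+e^{-t})$, and assume $0<\mathbb{P}(y=1)<1$. Let $\mathcal{P}_0,\mathcal{P}_1$ be the conditional distributions of $\boldsymbol{x}$ given $y=0$ and $y=1$, and use the logistic loss $\ell(\boldsymbol{\theta};\boldsymbol{x},y)=\log(1+\exp\{\boldsymbol{\theta}^\top\boldsymbol{x}\})-y\,\boldsymbol{x}^\top\boldsymbol{\theta}$. Let $\boldsymbol{\theta}^*$ be the unique minimizer of the balanced risk $\mathcal{R}(\boldsymbol{\theta})=\frac12\mathbb{E}_{\mathcal{P}_0}\ell(\boldsymbol{\theta};\boldsymbol{x},0)+\frac12\mathbb{E}_{\mathcal{P}_1}\ell(\boldsymbol{\theta};\boldsymbol{x},1)$, and let $\phi(\boldsymbol{\theta})=\mathbb{E}_{\mathcal{P}_0}\ell(\boldsymbol{\theta};\boldsymbol{x},0)-\mathbb{E}_{\mathcal{P}_1}\ell(\boldsymbol{\theta};\boldsymbol{x},1)$. If \[ \mathbb{E}_{p(\boldsymbol{x})}\big[\boldsymbol{x}\,\sigma(\boldsymbol{\theta}_{\mathrm{true}}^\top\boldsymbol{x})\big(1-\sigma(\boldsymbol{\theta}_{\mathrm{true}}^\top\boldsymbol{x})\big)\big]=\mathbf{0}, \] then $\nabla\phi(\boldsymbol{\theta}^*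 )=\mathbf{0}$.
   Context: Gradients are with respect to $\boldsymbol{\theta}\in\mathbb{R}^d$. The model has no intercept. *)

theory Defs
  imports "HOL-Probability.Probability"
begin

definition sigmoid :: "real \<Rightarrow> real" where
  "sigmoid t = 1 / (1 + exp (- t))"

definition logloss :: "'a::euclidean_space \<Rightarrow> 'a \<Rightarrow> real \<Rightarrow> real" where
  "logloss \<theta> x y = ln (1 + exp (\<theta> \<bullet> x)) - y * (x \<bullet> \<theta>)"

definition prob_pos :: "'a::euclidean_space measure \<Rightarrow> 'a \<Rightarrow> real" where
  "prob_pos M \<theta>t = (\<integral>x. sigmoid (x \<bullet> \<theta>t) \<partial>M)"

text \<open>Conditional distribution of x given y (Bayes): density P(y|x)/P(y) w.r.t. p.\<close>
definition cond_dist :: "'a::euclidean_space measure \<Rightarrow> 'a \<Rightarrow> real \<Rightarrow> 'a measure" where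
  "cond_dist M \<theta>t y = density M (\<lambda>x. ennreal
      (if y = 1 then sigmoid (x \<bullet> \<theta>t) / prob_pos M \<theta>t
       else (1 - sigmoid (x \<bullet> \<theta>t)) / (1 - prob_pos M \<theta>t)))"

definition balanced_risk :: "'a::euclidean_space measure \<Rightarrow> 'a \<Rightarrow> 'a \<Rightarrow> real" where
  "balanced_risk M \<theta>t \<theta> =
     1/2 * (\<integral>x. logloss \<theta> x 0 \<partial>cond_dist M \<theta>t 0)
   + 1/2 * (\<integral>x. logloss \<theta> x 1 \<partial>cond_dist M \<theta>t 1)"

definition phi :: "'a::euclidean_space measure \<Rightarrow> 'a \<Rightarrow> 'a \<Rightarrow> real" where
  "phi M \<theta>t \<theta> =
     (\<integral>x. logloss \<theta> x 0 \<partial>cond_dist M \<theta>t 0)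
   - (\<integral>x. logloss \<theta> x 1 \<partial>cond_dist M \<theta>t 1)"

end

theory Submission
  imports Defs
begin

(* At theta_true, reweighting by the Bayes factor P(y | x) / P(y) turns the residual
   sigmoid (theta_true . x) - y of either class into a constant multiple of
   sigmoid * (1 - sigmoid).  Hence the gradient E_{P_y}[(sigmoid (theta_true . x) - y) x] of each
   class-conditional risk is a multiple of E_p[sigmoid (1 - sigmoid) x] = 0.  Both class-conditional
   risks are convex, since softplus lies above its tangents, so theta_true minimises the balanced
   risk and therefore equals theta_star, and grad phi (theta_star) is the difference of two
   vanishing gradients.  Differentiation under the integral is justified by dominated convergence:
   softplus is 1-Lipschitz and E |x| is finite. *)

definition softplus :: "real \<Rightarrow> real" where
  "softplus t = ln (1 + exp t)"

lemma sigmoid_eq: "sigmoid t = exp t / (1 + exp t)"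
  unfolding sigmoid_def by (simp add: exp_minus field_simps)

lemma sigmoid_pos: "0 < sigmoid t"
  unfolding sigmoid_eq by (simp add: add_pos_pos)

lemma sigmoid_less_one: "sigmoid t < 1"
  unfolding sigmoid_eq by (simp add: add_pos_pos)

lemma softplus_nonneg: "0 \<le> softplus t"
  unfolding softplus_def by simp

lemma softplus_has_real_derivative: "(softplus has_real_derivative sigmoid t) (at t)"
  unfolding softplus_def[abs_def]
  by (rule derivative_eq_intros refl | simp add: sigmoid_eq add_pos_pos)+

lemma softplus_above_tangent: "softplus a + sigmoid a * (b - a) \<le> softplus b"
proof -
  define p where "p = sigmoid a"
  have p: "0 \<le> p" "p \<le> 1"
    using sigmoid_pos[of a] sigmoid_less_one[of a] by (auto simp: p_def)
  have pos: "0 < 1 + exp t" for t :: real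
    by (simp add: add_pos_pos)
  have "exp (p * (b - a)) \<le> (1 - p) * exp 0 + p * exp (b - a)"
    using convex_onD[OF exp_convex, of p 0 "b - a"] p by simp
  also have "\<dots> = (1 + exp b) / (1 + exp a)"
    using pos[of a] by (simp add: p_def sigmoid_eq field_simps exp_diff)
  finally have "p * (b - a) \<le> ln ((1 + exp b) / (1 + exp a))"
    using pos by (simp add: ln_ge_iff)
  then show ?thesis
    using pos[of a] pos[of b] by (simp add: softplus_def p_def ln_div)
qed

lemma softplus_lipschitz: "\<bar>softplus b - softplus a\<bar> \<le> \<bar>b - a\<bar>"
proof -
  have "\<bar>sigmoid t * u\<bar> \<le> \<bar>u\<bar>" for t u
    using sigmoid_pos[of t] sigmoid_less_one[of t] by (simp add: abs_mult mult_left_le_one_le)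
  from this[of a "b - a"] this[of b "a - b"] show ?thesis
    using softplus_above_tangent[of a b] softplus_above_tangent[of b a] by linarith
qed

lemma softplus_le: "softplus t \<le> 1 + \<bar>t\<bar>"
  using softplus_lipschitz[of t 0] ln_2_less_1 by (simp add: softplus_def)

lemma logloss_eq_softplus: "logloss \<theta> x y = softplus (\<theta> \<bullet> x) - y * (\<theta> \<bullet> x)"
  by (simp add: logloss_def softplus_def inner_commute)

lemma logloss_has_derivative:
  "((\<lambda>\<theta>. logloss \<theta> x y) has_derivative (\<lambda>h. (sigmoid (\<theta> \<bullet> x) - y) * (h \<bullet> x))) (at \<theta>)"
  unfolding logloss_eq_softplus
  by (rule derivative_eq_intros DERIV_compose_FDERIV[OF softplus_has_real_derivative] refl
      | simp add: algebra_simps)+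

lemma logloss_above_tangent:
  "logloss \<theta> x y + (sigmoid (\<theta> \<bullet> x) - y) * ((\<theta>' - \<theta>) \<bullet> x) \<le> logloss \<theta>' x y"
  using softplus_above_tangent[of "\<theta> \<bullet> x" "\<theta>' \<bullet> x"]
  by (simp add: logloss_eq_softplus algebra_simps)

lemma logloss_remainder_le:
  "\<bar>logloss (\<theta> + h) x y - logloss \<theta> x y - (sigmoid (\<theta> \<bullet> x) - y) * (h \<bullet> x)\<bar> \<le> norm h * (2 * norm x)"
proof -
  have "\<bar>softplus (\<theta> \<bullet> x + h \<bullet> x) - softplus (\<theta> \<bullet> x)\<bar> \<le> \<bar>h \<bullet> x\<bar>"
    using softplus_lipschitz[of "\<theta> \<bullet> x + h \<bullet> x" "\<theta> \<bullet> x"] by simp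
  moreover have "\<bar>sigmoid (\<theta> \<bullet> x) * (h \<bullet> x)\<bar> \<le> \<bar>h \<bullet> x\<bar>"
    using sigmoid_pos[of "\<theta> \<bullet> x"] sigmoid_less_one[of "\<theta> \<bullet> x"]
    by (simp add: abs_mult mult_left_le_one_le)
  moreover have "\<bar>h \<bullet> x\<bar> \<le> norm h * norm x"
    by (rule Cauchy_Schwarz_ineq2)
  ultimately show ?thesis
    by (simp add: logloss_eq_softplus algebra_simps)
qed

lemma abs_logloss_le: "\<bar>logloss \<theta> x y\<bar> \<le> 1 + (1 + \<bar>y\<bar>) * (norm \<theta> * norm x)"
proof -
  have "\<bar>\<theta> \<bullet> x\<bar> \<le> norm \<theta> * norm x"
    by (rule Cauchy_Schwarz_ineq2)
  moreover have "\<bar>y * (\<theta> \<bullet> x)\<bar> \<le> \<bar>y\<bar> * (norm \<theta> * norm x)"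
    using calculation by (simp add: abs_mult mult_left_mono)
  ultimately show ?thesis
    using softplus_le[of "\<theta> \<bullet> x"] softplus_nonneg[of "\<theta> \<bullet> x"]
    by (simp add: logloss_eq_softplus algebra_simps)
qed

lemma has_derivative_integral:
  fixes f :: "'a::euclidean_space \<Rightarrow> 'b \<Rightarrow> real"
  assumes f_deriv: "\<And>x. ((\<lambda>\<theta>. f \<theta> x) has_derivative f' x) (at \<theta>)"
    and f_int: "\<And>\<theta>. integrable M (f \<theta>)"
    and f'_int: "\<And>h. integrable M (\<lambda>x. f' x h)"
    and remainder: "\<And>h x. \<bar>f (\<theta> + h) x - f \<theta> x - f' x h\<bar> \<le> norm h * g x"
    and g_int: "integrable M g"
  shows "((\<lambda>\<theta>. \<integral>x. f \<theta> x \<partial>M) has_derivative (\<lambda>h. \<integral>x. f' x h \<partial>M)) (at \<theta>)"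
    (is "(?F has_derivative ?D) _")
  unfolding has_derivative_at
proof
  have lin: "linear (f' x)" for x
    using f_deriv[of x] by (simp add: has_derivative_def bounded_linear.linear)
  show "bounded_linear ?D"
    unfolding linear_conv_bounded_linear[symmetric]
    by (rule linearI) (simp_all add: linear_add[OF lin] linear_scale[OF lin] f'_int)
  define r where "r h x = (f (\<theta> + h) x - f \<theta> x - f' x h) / norm h" for h x
  have r_lim: "((\<lambda>h. r h x) \<longlongrightarrow> 0) (at 0)" for x
  proof (rule tendsto_norm_zero_cancel)
    show "((\<lambda>h. norm (r h x)) \<longlongrightarrow> 0) (at 0)"
      using f_deriv[of x] by (simp add: has_derivative_at r_def)
  qed
  have "((\<lambda>h. \<integral>x. r h x \<partial>M) \<longlongrightarrow> 0) (at 0)"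
    unfolding tendsto_at_iff_sequentially comp_def
  proof (intro allI impI)
    fix X :: "nat \<Rightarrow> 'a"
    assume X_ne: "\<forall>i. X i \<in> UNIV - {0}" and X_lim: "X \<longlonglongrightarrow> 0"
    have "(\<lambda>i. \<integral>x. r (X i) x \<partial>M) \<longlonglongrightarrow> (\<integral>x. 0 \<partial>M)"
    proof (rule integral_dominated_convergence[OF _ _ g_int])
      show "r (X i) \<in> borel_measurable M" for i
        unfolding r_def using f_int f'_int by measurable
      show "AE x in M. (\<lambda>i. r (X i) x) \<longlonglongrightarrow> 0"
        using r_lim X_ne X_lim by (simp add: tendsto_at_iff_sequentially comp_def)
      show "AE x in M. norm (r (X i) x) \<le> g x" for i
        using remainder[of "X i"] X_ne by (simp add: r_def divide_le_eq mult.commute)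
    qed simp
    then show "(\<lambda>i. \<integral>x. r (X i) x \<partial>M) \<longlonglongrightarrow> 0"
      by simp
  qed
  then have "((\<lambda>h. \<bar>\<integral>x. r h x \<partial>M\<bar>) \<longlongrightarrow> 0) (at 0)"
    by (rule tendsto_rabs_zero)
  moreover have "\<forall>\<^sub>F h in at 0. \<bar>\<integral>x. r h x \<partial>M\<bar> = norm (?F (\<theta> + h) - ?F \<theta> - ?D h) / norm h"
    using f_int f'_int by (auto simp: r_def eventually_at_filter)
  ultimately show "((\<lambda>h. norm (?F (\<theta> + h) - ?F \<theta> - ?D h) / norm h) \<longlongrightarrow> 0) (at 0)"
    by (rule Lim_transform_eventually)
qed

context
  fixes N :: "'a::euclidean_space measure"
  assumes finite_N: "finite_measure N"
    and sets_N [measurable_cong]: "sets N = sets borel"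
    and integrable_norm_N: "integrable N norm"
begin

lemma integrable_logloss: "integrable N (\<lambda>x. logloss \<theta> x y)"
proof (rule Bochner_Integration.integrable_bound)
  show "integrable N (\<lambda>x. 1 + (1 + \<bar>y\<bar>) * norm \<theta> * norm x)"
    using finite_N integrable_norm_N by (simp add: finite_measure.integrable_const)
  show "(\<lambda>x. logloss \<theta> x y) \<in> borel_measurable N"
    unfolding logloss_def by measurable
  show "AE x in N. norm (logloss \<theta> x y) \<le> norm (1 + (1 + \<bar>y\<bar>) * norm \<theta> * norm x)"
    using abs_logloss_le[of \<theta> _ y] by (intro AE_I2) (simp add: mult.assoc)
qed

lemma integrable_logloss_gradient: "integrable N (\<lambda>x. (sigmoid (\<theta> \<bullet> x) - y) * (h \<bullet> x))"
proof (rule Bochner_Integration.integrable_bound)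
  show "integrable N (\<lambda>x. (1 + \<bar>y\<bar>) * norm h * norm x)"
    using integrable_norm_N by simp
  show "(\<lambda>x. (sigmoid (\<theta> \<bullet> x) - y) * (h \<bullet> x)) \<in> borel_measurable N"
    unfolding sigmoid_def by measurable
  have "\<bar>(sigmoid (\<theta> \<bullet> x) - y) * (h \<bullet> x)\<bar> \<le> (1 + \<bar>y\<bar>) * (norm h * norm x)" for x
    unfolding abs_mult
  proof (rule mult_mono)
    show "\<bar>sigmoid (\<theta> \<bullet> x) - y\<bar> \<le> 1 + \<bar>y\<bar>"
      using sigmoid_pos[of "\<theta> \<bullet> x"] sigmoid_less_one[of "\<theta> \<bullet> x"] by linarith
  qed (simp_all add: Cauchy_Schwarz_ineq2)
  then show "AE x in N. norm ((sigmoid (\<theta> \<bullet> x) - y) * (h \<bullet> x)) \<le> norm ((1 + \<bar>y\<bar>) * norm h * norm x)"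
    by (intro AE_I2) (simp add: mult.assoc)
qed

lemma expected_logloss_has_derivative:
  "((\<lambda>\<theta>. \<integral>x. logloss \<theta> x y \<partial>N) has_derivative
     (\<lambda>h. \<integral>x. (sigmoid (\<theta> \<bullet> x) - y) * (h \<bullet> x) \<partial>N)) (at \<theta>)"
  by (rule has_derivative_integral[OF logloss_has_derivative integrable_logloss
        integrable_logloss_gradient logloss_remainder_le])
    (simp add: integrable_norm_N)

lemma expected_logloss_above_tangent:
  "(\<integral>x. logloss \<theta> x y \<partial>N) + (\<integral>x. (sigmoid (\<theta> \<bullet> x) - y) * ((\<theta>' - \<theta>) \<bullet> x) \<partial>N)
     \<le> (\<integral>x. logloss \<theta>' x y \<partial>N)"
proof -
  have "(\<integral>x. logloss \<theta> x y \<partial>N) + (\<integral>x. (sigmoid (\<theta> \<bullet> x) - y) * ((\<theta>' - \<theta>) \<bullet> x) \<partial>N)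
      = (\<integral>x. logloss \<theta> x y + (sigmoid (\<theta> \<bullet> x) - y) * ((\<theta>' - \<theta>) \<bullet> x) \<partial>N)"
    using integrable_logloss integrable_logloss_gradient by (rule Bochner_Integration.integral_add[symmetric])
  also have "\<dots> \<le> (\<integral>x. logloss \<theta>' x y \<partial>N)"
    using integrable_logloss integrable_logloss_gradient
    by (intro integral_mono logloss_above_tangent) auto
  finally show ?thesis .
qed

end

definition cond_weight :: "'a::euclidean_space measure \<Rightarrow> 'a \<Rightarrow> real \<Rightarrow> 'a \<Rightarrow> real" where
  "cond_weight M \<theta>t y x =
     (if y = 1 then sigmoid (x \<bullet> \<theta>t) / prob_pos M \<theta>t
      else (1 - sigmoid (x \<bullet> \<theta>t)) / (1 - prob_pos M \<theta>t))"

lemma cond_dist_eq_density: "cond_dist M \<theta>t y = density M (\<lambda>x. ennreal (cond_weight M \<theta>t y x))"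
  by (simp add: cond_dist_def cond_weight_def)

context
  fixes M :: "'a::euclidean_space measure" and \<theta>t :: 'a
  assumes prob_M: "prob_space M"
    and sets_M [measurable_cong]: "sets M = sets borel"
    and integrable_norm_M: "integrable M norm"
    and prob_pos_gt_0: "0 < prob_pos M \<theta>t" and prob_pos_lt_1: "prob_pos M \<theta>t < 1"
begin

lemma borel_measurable_cond_weight [measurable]: "cond_weight M \<theta>t y \<in> borel_measurable M"
  unfolding cond_weight_def[abs_def] sigmoid_def by measurable

lemma cond_weight_nonneg: "0 \<le> cond_weight M \<theta>t y x"
  using prob_pos_gt_0 prob_pos_lt_1 sigmoid_pos[of "x \<bullet> \<theta>t"] sigmoid_less_one[of "x \<bullet> \<theta>t"]
  by (simp add: cond_weight_def)

lemma cond_weight_le: "cond_weight M \<theta>t y x \<le> 1 / prob_pos M \<theta>t + 1 / (1 - prob_pos M \<theta>t)"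
proof -
  have "sigmoid (x \<bullet> \<theta>t) / prob_pos M \<theta>t \<le> 1 / prob_pos M \<theta>t"
    "(1 - sigmoid (x \<bullet> \<theta>t)) / (1 - prob_pos M \<theta>t) \<le> 1 / (1 - prob_pos M \<theta>t)"
    using prob_pos_gt_0 prob_pos_lt_1 sigmoid_pos[of "x \<bullet> \<theta>t"] sigmoid_less_one[of "x \<bullet> \<theta>t"]
    by (simp_all add: divide_right_mono)
  moreover have "0 \<le> 1 / prob_pos M \<theta>t" "0 \<le> 1 / (1 - prob_pos M \<theta>t)"
    using prob_pos_gt_0 prob_pos_lt_1 by simp_all
  ultimately show ?thesis
    unfolding cond_weight_def by (split if_split) (intro conjI impI; linarith)
qed

lemma integral_cond_weight: "(\<integral>x. cond_weight M \<theta>t y x \<partial>M) = 1"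
proof -
  interpret prob_space M by (rule prob_M)
  have "integrable M (\<lambda>x. sigmoid (x \<bullet> \<theta>t))"
    using sigmoid_pos sigmoid_less_one
    by (intro integrable_const_bound[where B=1]) (auto simp: less_imp_le sigmoid_def)
  then show ?thesis
    using prob_pos_gt_0 prob_pos_lt_1 unfolding cond_weight_def prob_pos_def
    by (cases "y = 1") (simp_all add: prob_space)
qed

lemma integral_cond_dist:
  "f \<in> borel_measurable M \<Longrightarrow> (\<integral>x. f x \<partial>cond_dist M \<theta>t y) = (\<integral>x. cond_weight M \<theta>t y x * f x \<partial>M)"
  unfolding cond_dist_eq_density by (simp add: integral_density cond_weight_nonneg)

lemma prob_space_cond_dist: "prob_space (cond_dist M \<theta>t y)"
proof
  have "integrable M (cond_weight M \<theta>t y)"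
    using prob_M cond_weight_nonneg cond_weight_le
    by (intro finite_measure.integrable_const_bound[where B="1 / prob_pos M \<theta>t + 1 / (1 - prob_pos M \<theta>t)"])
      (auto simp: prob_space_def)
  then show "emeasure (cond_dist M \<theta>t y) (space (cond_dist M \<theta>t y)) = 1"
    by (simp add: cond_dist_eq_density emeasure_density nn_integral_eq_integral cond_weight_nonneg
        integral_cond_weight)
qed

lemma sets_cond_dist: "sets (cond_dist M \<theta>t y) = sets borel"
  by (simp add: cond_dist_eq_density sets_M)

lemma integrable_norm_cond_dist: "integrable (cond_dist M \<theta>t y) norm"
  unfolding cond_dist_eq_density
proof (subst integrable_density)
  show "integrable M (\<lambda>x. cond_weight M \<theta>t y x *\<^sub>R norm x)"
  proof (rule Bochner_Integration.integrable_bound)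
    show "integrable M (\<lambda>x. (1 / prob_pos M \<theta>t + 1 / (1 - prob_pos M \<theta>t)) * norm x)"
      using integrable_norm_M by simp
    show "AE x in M. norm (cond_weight M \<theta>t y x *\<^sub>R norm x)
        \<le> norm ((1 / prob_pos M \<theta>t + 1 / (1 - prob_pos M \<theta>t)) * norm x)"
      using cond_weight_nonneg cond_weight_le
      by (intro AE_I2) (auto simp: mult_right_mono intro: order_trans[OF _ abs_ge_self])
  qed measurable
qed (simp_all add: cond_weight_nonneg)

lemma cond_weight_mult_residual:
  assumes "y \<in> {0, 1}"
  shows "cond_weight M \<theta>t y x * (sigmoid (\<theta>t \<bullet> x) - y)
    = (if y = 1 then - 1 / prob_pos M \<theta>t else 1 / (1 - prob_pos M \<theta>t))
      * (sigmoid (\<theta>t \<bullet> x) * (1 - sigmoid (\<theta>t \<bullet> x)))"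
  using assms prob_pos_gt_0 prob_pos_lt_1 by (auto simp: cond_weight_def inner_commute field_simps)

lemma integral_cond_dist_logloss_gradient:
  assumes "y \<in> {0, 1}"
  shows "(\<integral>x. (sigmoid (\<theta>t \<bullet> x) - y) * (h \<bullet> x) \<partial>cond_dist M \<theta>t y)
    = (if y = 1 then - 1 / prob_pos M \<theta>t else 1 / (1 - prob_pos M \<theta>t))
      * (h \<bullet> (\<integral>x. (sigmoid (\<theta>t \<bullet> x) * (1 - sigmoid (\<theta>t \<bullet> x))) *\<^sub>R x \<partial>M))"
proof -
  define c where "c = (if y = 1 then - 1 / prob_pos M \<theta>t else 1 / (1 - prob_pos M \<theta>t))"
  define v where "v x = sigmoid (\<theta>t \<bullet> x) * (1 - sigmoid (\<theta>t \<bullet> x))" for x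
  have "integrable M (\<lambda>x. v x *\<^sub>R x)"
  proof (rule Bochner_Integration.integrable_bound[OF integrable_norm_M])
    show "(\<lambda>x. v x *\<^sub>R x) \<in> borel_measurable M"
      unfolding v_def sigmoid_def by measurable
    have "\<bar>v x\<bar> \<le> 1" for x
      using sigmoid_pos[of "\<theta>t \<bullet> x"] sigmoid_less_one[of "\<theta>t \<bullet> x"]
      by (simp add: v_def abs_mult mult_le_one)
    then show "AE x in M. norm (v x *\<^sub>R x) \<le> norm (norm x)"
      by (intro AE_I2) (simp add: mult_left_le_one_le)
  qed
  have "(\<integral>x. (sigmoid (\<theta>t \<bullet> x) - y) * (h \<bullet> x) \<partial>cond_dist M \<theta>t y)
      = (\<integral>x. cond_weight M \<theta>t y x * ((sigmoid (\<theta>t \<bullet> x) - y) * (h \<bullet> x)) \<partial>M)"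
    by (rule integral_cond_dist) (unfold sigmoid_def, measurable)
  also have "\<dots> = (\<integral>x. c * (h \<bullet> (v x *\<^sub>R x)) \<partial>M)"
    using cond_weight_mult_residual[OF assms] by (simp add: c_def v_def mult.assoc[symmetric])
  also have "\<dots> = c * (h \<bullet> (\<integral>x. v x *\<^sub>R x \<partial>M))"
    using integral_inner_right[OF \<open>integrable M (\<lambda>x. v x *\<^sub>R x)\<close>, of h] by simp
  finally show ?thesis
    by (simp add: c_def v_def)
qed

end

theorem proposition2:
  fixes M :: "'a::euclidean_space measure" and \<theta>t \<theta>s :: 'a
  assumes "prob_space M"
    and "sets M = sets borel"
    and "integrable M (\<lambda>x. norm x)"
    and "0 < prob_pos M \<theta>t" and "prob_pos M \<theta>t < 1"
    and "\<forall>\<theta>. balanced_risk M \<theta>t \<theta>s \<le> balanced_risk M \<theta>t \<theta>"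
    and "\<forall>\<theta>. (\<forall>\<theta>'. balanced_risk M \<theta>t \<theta> \<le> balanced_risk M \<theta>t \<theta>') \<longrightarrow> \<theta> = \<theta>s"
    and "(\<integral>x. (sigmoid (\<theta>t \<bullet> x) * (1 - sigmoid (\<theta>t \<bullet> x))) *\<^sub>R x \<partial>M) = 0"
  shows "(phi M \<theta>t has_derivative (\<lambda>h. 0)) (at \<theta>s)"
proof -
  let ?N = "cond_dist M \<theta>t"
  let ?L = "\<lambda>y \<theta>. \<integral>x. logloss \<theta> x y \<partial>?N y"
  have N: "finite_measure (?N y)" "sets (?N y) = sets borel" "integrable (?N y) norm" for y
    using prob_space_cond_dist[OF assms(1-5)] sets_cond_dist[OF assms(1-5)]
      integrable_norm_cond_dist[OF assms(1-5)] by (simp_all add: prob_space_def)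
  have gradient_zero: "(\<integral>x. (sigmoid (\<theta>t \<bullet> x) - y) * (h \<bullet> x) \<partial>?N y) = 0" if "y \<in> {0, 1}" for y h
    using integral_cond_dist_logloss_gradient[OF assms(1-5) that] assms(8) by simp
  have "balanced_risk M \<theta>t \<theta>t \<le> balanced_risk M \<theta>t \<theta>" for \<theta>
    using expected_logloss_above_tangent[OF N[of 0], of \<theta>t 0 \<theta>]
      expected_logloss_above_tangent[OF N[of 1], of \<theta>t 1 \<theta>]
      gradient_zero[of 0 "\<theta> - \<theta>t"] gradient_zero[of 1 "\<theta> - \<theta>t"]
    by (simp add: balanced_risk_def)
  then have "\<theta>t = \<theta>s"
    using assms(7) by blast
  have "(?L y has_derivative (\<lambda>h. 0)) (at \<theta>t)" if "y \<in> {0, 1}" for y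
    using expected_logloss_has_derivative[OF N[of y], of y \<theta>t] by (simp add: gradient_zero[OF that])
  then have "((\<lambda>\<theta>. ?L 0 \<theta> - ?L 1 \<theta>) has_derivative (\<lambda>h. 0 - 0)) (at \<theta>t)"
    by (intro has_derivative_diff) auto
  then show ?thesis
    using \<open>\<theta>t = \<theta>s\<close> by (simp add: phi_def[abs_def])
qed

end
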